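(* Let $P$ be a tree poset of height $h$, and suppose there is an element $x\in P$ with the following property: for every $\varepsilon>0$ there exists $\delta>0$ such that for every sufficiently large $n\in\mathbb N$, every family $\mathcal F\subseteq 2^{[n]}$ with $|\mathcal F|\ge (h-1+\varepsilon)\binom{n}{\lfloor n/2\rfloor}$ contains a copy of the blow-up $P(x,\delta n)$. Then the number of $P$-free families in $2^{[n]}$ is $$2^{(h-1+o(1))\binom{n}{\lfloor n/2\rfloor}}\quad (n\to\infty).$$
   Context: Posets are finite collections of finite sets ordered by inclusion. A poset homomorphism $\phi:P\to Q$ is a map with $A\subseteq B\Rightarrow \phi(A)\subseteq\phi(B)$. $P$ is a subposet of $Q$ (and $Q$ "contains a copy of $P$") if there is an injective poset homomorphism $P\to Q$; otherwise $Q$ is $P$-free. The Hasse diagram of $P$ is the directed graph on $P$ with an edge $A\to B$ when $A\subsetneq B$ and no $C\in P$ has $A\subsetneq C\subsetneq B$; the undirected Hasse diagram forgets orientations. A tree poset is a poset whose undirected Hasse diagram is a tree. The height $h(P)$ is the number of elements of a longest chain in $P$. For a tree poset $P$, $x\in P$ and an integer $d\ge2$, the $d$-blow-up $P(x,d)$ rooted at $x$ is the tree poset whose Hasse diagram is obtained as follows: each $u\in P$ at distance $\rho$ from $x$ in the undirected Hasse diagram is replaced by $d^{\rho}$ elements $u^1,\dots,u^{d^\rho}$; for each edge $uv$ of the Hasse diagram with $v$ at distance $\rho-1$ from $x$ (and $u$ at distance $\rho$), the $u^i$ are partitioned into $d^{\rho-1}$ disjoint sets $U^1,\dots,U^{d^{\rho-1}}$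 of size $d$ and $v^j$ is joined to every element of $U^j$, with the same orientation as the edge $uv$. Non-integer blow-up parameters such as $\delta n$ are rounded down to integers. *)

theory Defs
  imports Complex_Main
begin

text \<open>Posets are finite collections of finite sets, ordered by inclusion.\<close>

definition is_poset :: "'a set set \<Rightarrow> bool" where
  "is_poset P \<longleftrightarrow> finite P \<and> (\<forall>A\<in>P. finite A)"

definition contains_copy :: "'b set set \<Rightarrow> 'a set set \<Rightarrow> bool" where
  "contains_copy Q P \<longleftrightarrow>
     (\<exists>\<phi>. \<phi> ` P \<subseteq> Q \<and> inj_on \<phi> P \<and> (\<forall>A\<in>P. \<forall>B\<in>P. A \<subseteq> B \<longrightarrow> \<phi> A \<subseteq> \<phi> B))"

definition P_free :: "'a set set \<Rightarrow> 'b set set \<Rightarrow> bool" where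
  "P_free P Q \<longleftrightarrow> \<not> contains_copy Q P"

definition hasse :: "'a set set \<Rightarrow> 'a set \<Rightarrow> 'a set \<Rightarrow> bool" where
  "hasse P A B \<longleftrightarrow> A \<in> P \<and> B \<in> P \<and> A \<subset> B \<and> \<not> (\<exists>C\<in>P. A \<subset> C \<and> C \<subset> B)"

definition hasse_adj :: "'a set set \<Rightarrow> ('a set \<times> 'a set) set" where
  "hasse_adj P = {(A, B). hasse P A B \<or> hasse P B A}"

definition hasse_edges :: "'a set set \<Rightarrow> 'a set set set" where
  "hasse_edges P = {{A, B} | A B. hasse P A B}"

definition tree_poset :: "'a set set \<Rightarrow> bool" where
  "tree_poset P \<longleftrightarrow> is_poset P \<and> P \<noteq> {} \<and>
     (\<forall>A\<in>P. \<forall>B\<in>P. (A, B) \<in> (hasse_adj P)\<^sup>*) \<and>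
     card (hasse_edges P) = card P - 1"

definition is_chain :: "'a set set \<Rightarrow> bool" where
  "is_chain C \<longleftrightarrow> (\<forall>A\<in>C. \<forall>B\<in>C. A \<subseteq> B \<or> B \<subseteq> A)"

definition height :: "'a set set \<Rightarrow> nat" where
  "height P = Max {card C | C. C \<subseteq> P \<and> is_chain C}"

definition hdist :: "'a set set \<Rightarrow> 'a set \<Rightarrow> 'a set \<Rightarrow> nat" where
  "hdist P x u = (LEAST k. (x, u) \<in> (hasse_adj P) ^^ k)"

text \<open>The d-blow-up P(x,d): element u at distance rho is replaced by the copies (u,i), i < d^rho.
  For a Hasse edge between u (distance rho) and v (distance rho-1), the copy v^j is joined to
  the block U^j = {u^i. i div d = j} (a partition into d^(rho-1) blocks of size d), with the
  orientation of the original edge.\<close>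
definition blowup_vertices :: "'a set set \<Rightarrow> 'a set \<Rightarrow> nat \<Rightarrow> ('a set \<times> nat) set" where
  "blowup_vertices P x d = {(u, i). u \<in> P \<and> i < d ^ hdist P x u}"

definition blowup_hasse :: "'a set set \<Rightarrow> 'a set \<Rightarrow> nat \<Rightarrow> ('a set \<times> nat) \<Rightarrow> ('a set \<times> nat) \<Rightarrow> bool" where
  "blowup_hasse P x d a b \<longleftrightarrow>
     a \<in> blowup_vertices P x d \<and> b \<in> blowup_vertices P x d \<and> hasse P (fst a) (fst b) \<and>
     ((hdist P x (fst a) = hdist P x (fst b) + 1 \<and> snd b = snd a div d) \<or>
      (hdist P x (fst b) = hdist P x (fst a) + 1 \<and> snd a = snd b div d))"

text \<open>Since the order of the tree poset P(x,d) is the reflexive-transitive closure of its Hasse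
  edges, monotonicity is equivalent to monotonicity along the (directed) Hasse edges.\<close>
definition contains_blowup :: "'b set set \<Rightarrow> 'a set set \<Rightarrow> 'a set \<Rightarrow> nat \<Rightarrow> bool" where
  "contains_blowup Q P x d \<longleftrightarrow>
     (\<exists>\<phi>. \<phi> ` blowup_vertices P x d \<subseteq> Q \<and> inj_on \<phi> (blowup_vertices P x d) \<and>
          (\<forall>a b. blowup_hasse P x d a b \<longrightarrow> \<phi> a \<subseteq> \<phi> b))"

end

theory Submission
  imports Defs "HOL-Real_Asymp.Real_Asymp"
begin

(* Lower bound: a copy of P contains a chain of h sets of pairwise distinct sizes, so every
   subfamily of the h - 1 layers just above the middle of 2^[n] is P-free; these layers have
   (h - 1 - o(1)) binom(n, n/2) members.

   Upper bound, by containers: if every family of at least R = (h - 1 + eps) binom(n, n/2) sets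
   contains a copy of the blow-up P(x, D) with D = delta n, then every P-free family F has a
   fingerprint S, a subfamily of F of size at most |P| 2^n / D, and a container C(S) containing F
   with |C(S)| < R + |S| that depends on S alone. To build them, embed P(x, D) into the current
   ground set and explore it greedily from the root copy, accepting at each vertex the first of
   the D children of the accepted parent copy that lies in F. Since F is P-free the exploration
   gets stuck, having rejected at least D sets against at most |P| accepted ones; the accepted
   sets go into S and the construction recurses on the unqueried sets. As
   2^n / D = O(binom(n, n/2) / sqrt n), there are only 2^(o(binom(n, n/2))) fingerprints. *)

lemma hasse_mono_imp_mono:
  assumes "finite P" and hasse_mono: "\<And>A B. hasse P A B \<Longrightarrow> \<psi> A \<subseteq> \<psi> B"
    and "A \<in> P" "B \<in> P" "A \<subseteq> B"
  shows "\<psi> A \<subseteq> \<psi> B"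
  using assms(3-5)
proof (induction "card {C\<in>P. A \<subset> C \<and> C \<subseteq> B}" arbitrary: A rule: less_induct)
  case less
  let ?between = "{C\<in>P. A \<subset> C \<and> C \<subseteq> B}"
  show ?case
  proof (cases "A = B")
    case False
    have "finite ?between" using \<open>finite P\<close> by auto
    moreover have "?between \<noteq> {}" using less.prems False by auto
    ultimately obtain C where C: "C \<in> ?between" and C_min: "\<forall>D\<in>?between. D \<subseteq> C \<longrightarrow> C = D"
      using finite_has_minimal[of ?between] by auto
    have "\<not> (\<exists>D\<in>P. A \<subset> D \<and> D \<subset> C)"
    proof
      assume "\<exists>D\<in>P. A \<subset> D \<and> D \<subset> C"
      then obtain D where "D \<in> P" "A \<subset> D" "D \<subset> C" by blast
      then show False using C C_min by auto
    qed
    then have "hasse P A C"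
      unfolding hasse_def using less.prems C by auto
    have "{D\<in>P. C \<subset> D \<and> D \<subseteq> B} \<subset> ?between" using C by auto
    then have "card {D\<in>P. C \<subset> D \<and> D \<subseteq> B} < card ?between"
      using \<open>finite ?between\<close> by (rule psubset_card_mono[rotated])
    then have "\<psi> C \<subseteq> \<psi> B" using less C by auto
    then show ?thesis using hasse_mono[OF \<open>hasse P A C\<close>] by auto
  qed simp
qed

lemma P_free_subset: "P_free P F \<Longrightarrow> F' \<subseteq> F \<Longrightarrow> P_free P F'"
  unfolding P_free_def contains_copy_def by (meson order_trans)

lemma finite_hasse_edges: "finite P \<Longrightarrow> finite (hasse_edges P)"
proof -
  assume "finite P"
  have "hasse_edges P \<subseteq> (\<lambda>(A, B). {A, B}) ` (P \<times> P)"
    unfolding hasse_edges_def hasse_def by auto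
  then show ?thesis using \<open>finite P\<close> by (auto intro: finite_subset)
qed

locale rooted_tree_poset =
  fixes P :: "'a set set" and x :: "'a set"
  assumes tree: "tree_poset P" and root_in: "x \<in> P"
begin

lemma finite_P: "finite P"
  using tree unfolding tree_poset_def is_poset_def by auto

lemma hasse_adj_in: "(a, b) \<in> hasse_adj P \<Longrightarrow> a \<in> P \<and> b \<in> P"
  unfolding hasse_adj_def hasse_def by auto

lemma hasse_adj_pow_hdist: "u \<in> P \<Longrightarrow> (x, u) \<in> hasse_adj P ^^ hdist P x u"
proof -
  assume "u \<in> P"
  then have "(x, u) \<in> (hasse_adj P)\<^sup>*" using tree root_in unfolding tree_poset_def by auto
  then obtain k where "(x, u) \<in> hasse_adj P ^^ k" using rtrancl_power by blast
  then show ?thesis unfolding hdist_def by (rule LeastI)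
qed

lemma hdist_le: "(x, u) \<in> hasse_adj P ^^ k \<Longrightarrow> hdist P x u \<le> k"
  unfolding hdist_def by (rule Least_le)

lemma hdist_root: "hdist P x x = 0"
  using hdist_le[of x 0] by simp

lemma hdist_eq_0_imp_root: "u \<in> P \<Longrightarrow> hdist P x u = 0 \<Longrightarrow> u = x"
  using hasse_adj_pow_hdist[of u] by simp

definition parent :: "'a set \<Rightarrow> 'a set" where
  "parent u = (SOME v. (v, u) \<in> hasse_adj P \<and> hdist P x v + 1 = hdist P x u)"

lemma ex_parent:
  assumes "u \<in> P" "u \<noteq> x"
  shows "\<exists>v. (v, u) \<in> hasse_adj P \<and> hdist P x v + 1 = hdist P x u"
proof -
  obtain k where k: "hdist P x u = Suc k"
    using assms hdist_eq_0_imp_root by (cases "hdist P x u") auto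
  then obtain v where v: "(x, v) \<in> hasse_adj P ^^ k" "(v, u) \<in> hasse_adj P"
    using hasse_adj_pow_hdist[OF assms(1)] by auto
  have "(x, u) \<in> hasse_adj P ^^ Suc (hdist P x v)"
    using hasse_adj_pow_hdist v(2) hasse_adj_in by auto
  then have "hdist P x u \<le> hdist P x v + 1" using hdist_le by fastforce
  then show ?thesis using hdist_le[OF v(1)] v(2) k by auto
qed

lemma
  assumes "u \<in> P" "u \<noteq> x"
  shows parent_adj: "(parent u, u) \<in> hasse_adj P"
    and hdist_parent: "hdist P x (parent u) + 1 = hdist P x u"
    and parent_in: "parent u \<in> P"
  using someI_ex[OF ex_parent[OF assms]] hasse_adj_in unfolding parent_def by auto

lemma parent_induct [consumes 1, case_names root parent]:
  assumes "u \<in> P" and "Q x" and "\<And>u. u \<in> P \<Longrightarrow> u \<noteq> x \<Longrightarrow> Q (parent u) \<Longrightarrow> Q u"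
  shows "Q u"
  using assms(1)
proof (induction "hdist P x u" arbitrary: u rule: less_induct)
  case less
  then show ?case
    using assms(2,3) hdist_parent[of u] parent_in[of u] by (cases "u = x") auto
qed

text \<open>Since a tree has card P - 1 Hasse edges, the injection u \<mapsto> {u, parent u}
  from the non-root vertices is onto the Hasse edges.\<close>
lemma hasse_imp_parent:
  assumes "hasse P A B"
  shows "(A \<noteq> x \<and> parent A = B) \<or> (B \<noteq> x \<and> parent B = A)"
proof -
  let ?edge = "\<lambda>u. {u, parent u}"
  have inj: "inj_on ?edge (P - {x})"
  proof (rule inj_onI)
    fix u v assume u: "u \<in> P - {x}" and v: "v \<in> P - {x}" and eq: "?edge u = ?edge v"
    show "u = v"
    proof (rule ccontr)
      assume "u \<noteq> v"
      then have "u = parent v" "v = parent u" using eq by (auto simp: doubleton_eq_iff)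
      then show False using hdist_parent[of u] hdist_parent[of v] u v by auto
    qed
  qed
  have "card (?edge ` (P - {x})) = card P - 1"
    using card_image[OF inj] root_in finite_P by auto
  also have "\<dots> = card (hasse_edges P)"
    using tree unfolding tree_poset_def by simp
  finally have card_eq: "card (?edge ` (P - {x})) = card (hasse_edges P)" .
  have sub: "?edge ` (P - {x}) \<subseteq> hasse_edges P"
  proof
    fix E assume "E \<in> ?edge ` (P - {x})"
    then obtain u where u: "u \<in> P" "u \<noteq> x" "E = {u, parent u}" by auto
    then have "hasse P (parent u) u \<or> hasse P u (parent u)"
      using parent_adj unfolding hasse_adj_def by auto
    then show "E \<in> hasse_edges P"
      unfolding hasse_edges_def using u(3) by (auto simp: insert_commute)
  qed
  have "?edge ` (P - {x}) = hasse_edges P"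
    using finite_hasse_edges[OF finite_P] sub card_eq by (rule card_subset_eq)
  moreover have "{A, B} \<in> hasse_edges P"
    using assms unfolding hasse_edges_def by auto
  ultimately obtain u where u: "u \<in> P" "u \<noteq> x" "{A, B} = {u, parent u}"
    by (metis (no_types, lifting) DiffE imageE singletonI)
  moreover have "A \<noteq> B" using assms unfolding hasse_def by auto
  ultimately show ?thesis by (auto simp: doubleton_eq_iff)
qed

end

lemma first_true_cong:
  fixes p q :: "nat \<Rightarrow> bool"
  assumes agree: "\<And>t. t < d \<Longrightarrow> (\<forall>s<t. \<not> p s) \<Longrightarrow> q t = p t" and "t < d"
  shows "(\<forall>s<t. \<not> q s) \<longleftrightarrow> (\<forall>s<t. \<not> p s)"
  using \<open>t < d\<close>
proof (induction t)
  case (Suc t)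
  then have "(\<forall>s<Suc t. \<not> q s) \<longleftrightarrow> (\<forall>s<t. \<not> p s) \<and> \<not> q t"
    by (auto simp: less_Suc_eq)
  also have "\<dots> \<longleftrightarrow> (\<forall>s<Suc t. \<not> p s)"
    using agree[of t] Suc.prems by (auto simp: less_Suc_eq)
  finally show ?case .
qed simp

lemma finite_blowup_vertices: "finite P \<Longrightarrow> finite (blowup_vertices P x d)"
proof -
  assume "finite P"
  then have "blowup_vertices P x d \<subseteq> P \<times> {..< Max ((\<lambda>u. d ^ hdist P x u) ` P)}"
    unfolding blowup_vertices_def by (auto intro: less_le_trans)
  then show ?thesis by (rule finite_subset) (use \<open>finite P\<close> in simp)
qed

lemma fingerprint_budget:
  fixes p d s u y r :: real
  assumes "0 \<le> y" "y \<le> p" "0 \<le> r" "y = 0 \<or> d \<le> r" "0 < d" "s \<le> p * u / d"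
  shows "s + y \<le> p * (u + y + r) / d"
proof -
  have "y * d \<le> p * (y + r)"
    using assms(4)
  proof
    assume "d \<le> r"
    have "y * d \<le> p * r" using assms(1-3,5) \<open>d \<le> r\<close> by (intro mult_mono) auto
    also have "\<dots> \<le> p * (y + r)" using assms(1,2) by (intro mult_left_mono) auto
    finally show ?thesis .
  qed (use assms(1-3) in simp)
  then have "y \<le> p * (y + r) / d" using \<open>0 < d\<close> by (simp add: field_simps)
  then show ?thesis using assms(6) by (simp add: add_divide_distrib distrib_left)
qed

locale blowup_embedding = rooted_tree_poset P x for P :: "'a set set" and x +
  fixes d :: nat and \<phi> :: "'a set \<times> nat \<Rightarrow> 'c set" and U :: "'c set set"
  assumes d_pos: "d > 0"
    and embedding_in: "\<phi> ` blowup_vertices P x d \<subseteq> U"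
    and embedding_inj: "inj_on \<phi> (blowup_vertices P x d)"
    and embedding_mono: "\<And>a b. blowup_hasse P x d a b \<Longrightarrow> \<phi> a \<subseteq> \<phi> b"
begin

text \<open>The children of copy i of the parent of u are the copies i * d + t, t < d, of u.
  Exploring a family F, we accept the first of them that lies in F.\<close>
definition child_choice :: "'c set set \<Rightarrow> 'a set \<Rightarrow> nat \<Rightarrow> nat option" where
  "child_choice F u i =
     (if \<exists>t<d. \<phi> (u, i*d + t) \<in> F then Some (i*d + (LEAST t. \<phi> (u, i*d + t) \<in> F)) else None)"

primrec explore :: "'c set set \<Rightarrow> nat \<Rightarrow> 'a set \<Rightarrow> nat option" where
  "explore F 0 u = (if \<phi> (x, 0) \<in> F then Some 0 else None)"
| "explore F (Suc k) u = Option.bind (explore F k (parent u)) (child_choice F u)"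

text \<open>pick F u = Some j: the exploration from the root copy (x, 0) reached u and accepted its
  copy j; None: it got stuck on the way from x to u.\<close>
definition pick :: "'c set set \<Rightarrow> 'a set \<Rightarrow> nat option" where
  "pick F u = explore F (hdist P x u) u"

lemma pick_root: "pick F x = (if \<phi> (x, 0) \<in> F then Some 0 else None)"
  unfolding pick_def hdist_root by simp

lemma pick_nonroot:
  assumes "u \<in> P" "u \<noteq> x"
  shows "pick F u = Option.bind (pick F (parent u)) (child_choice F u)"
  using hdist_parent[OF assms] unfolding pick_def by (metis Suc_eq_plus1 explore.simps(2))

lemma child_choice_eq_Some_iff:
  "child_choice F u i = Some j \<longleftrightarrow>
     (\<exists>t<d. j = i*d + t \<and> \<phi> (u, i*d + t) \<in> F \<and> (\<forall>s<t. \<phi> (u, i*d + s) \<notin> F))"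
proof
  assume "child_choice F u i = Some j"
  then have ex: "\<exists>t<d. \<phi> (u, i*d + t) \<in> F" and j: "j = i*d + (LEAST t. \<phi> (u, i*d + t) \<in> F)"
    unfolding child_choice_def by (auto split: if_splits)
  from ex obtain t where t: "t < d" "\<phi> (u, i*d + t) \<in> F" by blast
  show "\<exists>t<d. j = i*d + t \<and> \<phi> (u, i*d + t) \<in> F \<and> (\<forall>s<t. \<phi> (u, i*d + s) \<notin> F)"
  proof (intro exI conjI allI impI)
    show "(LEAST t. \<phi> (u, i*d + t) \<in> F) < d" using t by (meson Least_le le_less_trans)
    show "\<phi> (u, i*d + (LEAST t. \<phi> (u, i*d + t) \<in> F)) \<in> F"
      using LeastI[of "\<lambda>t. \<phi> (u, i*d + t) \<in> F", OF t(2)] .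
  qed (use j not_less_Least in auto)
next
  assume "\<exists>t<d. j = i*d + t \<and> \<phi> (u, i*d + t) \<in> F \<and> (\<forall>s<t. \<phi> (u, i*d + s) \<notin> F)"
  then obtain t where t: "t < d" "j = i*d + t" "\<phi> (u, i*d + t) \<in> F" "\<forall>s<t. \<phi> (u, i*d + s) \<notin> F"
    by blast
  then have "(LEAST t. \<phi> (u, i*d + t) \<in> F) = t"
    by (intro Least_equality) (auto simp: not_less[symmetric])
  then show "child_choice F u i = Some j" unfolding child_choice_def using t by auto
qed

lemma child_choice_eq_None_iff: "child_choice F u i = None \<longleftrightarrow> (\<forall>t<d. \<phi> (u, i*d + t) \<notin> F)"
  unfolding child_choice_def by auto

lemma child_choice_cong:
  assumes "\<And>t. t < d \<Longrightarrow> (\<forall>s<t. \<phi> (u, i*d + s) \<notin> F) \<Longrightarrow>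
             (\<phi> (u, i*d + t) \<in> F') = (\<phi> (u, i*d + t) \<in> F)"
  shows "child_choice F' u i = child_choice F u i"
proof -
  have "(\<forall>s<t. \<phi> (u, i*d + s) \<notin> F') \<longleftrightarrow> (\<forall>s<t. \<phi> (u, i*d + s) \<notin> F)" if "t < d" for t
    using first_true_cong[of d "\<lambda>s. \<phi> (u, i*d + s) \<in> F" "\<lambda>s. \<phi> (u, i*d + s) \<in> F'"] assms that
    by blast
  then have "child_choice F' u i = Some j \<longleftrightarrow> child_choice F u i = Some j" for j
    unfolding child_choice_eq_Some_iff using assms by blast
  then show ?thesis by (cases "child_choice F u i"; cases "child_choice F' u i") auto
qed

lemma child_in_blowup:
  assumes "u \<in> P" "u \<noteq> x" "i < d ^ hdist P x (parent u)" "t < d"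
  shows "(u, i*d + t) \<in> blowup_vertices P x d"
proof -
  have "i*d + t < (i + 1) * d" using assms(4) by simp
  also have "\<dots> \<le> d ^ hdist P x (parent u) * d" using assms(3) by (intro mult_right_mono) auto
  also have "\<dots> = d ^ hdist P x u" using hdist_parent[OF assms(1,2)] by (metis Suc_eq_plus1 power_Suc2)
  finally show ?thesis unfolding blowup_vertices_def using assms(1) by auto
qed

lemma pick_SomeD:
  assumes "u \<in> P" "pick F u = Some j"
  shows "(u, j) \<in> blowup_vertices P x d \<and> \<phi> (u, j) \<in> F"
  using assms
proof (induction arbitrary: j rule: parent_induct)
  case root
  then show ?case
    using pick_root[of F] root_in d_pos unfolding blowup_vertices_def by (auto split: if_splits)
next
  case (parent u)
  then obtain i where i: "pick F (parent u) = Some i" "child_choice F u i = Some j"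
    using pick_nonroot[of u F] by (cases "pick F (parent u)") auto
  then obtain t where t: "t < d" "j = i*d + t" "\<phi> (u, j) \<in> F"
    unfolding child_choice_eq_Some_iff by blast
  have "i < d ^ hdist P x (parent u)"
    using parent.IH[OF i(1)] unfolding blowup_vertices_def by auto
  then show ?case using child_in_blowup[OF parent.hyps(1,2) _ t(1)] t by auto
qed

lemma pick_parent:
  assumes "u \<in> P" "u \<noteq> x" "pick F u = Some j"
  shows "pick F (parent u) = Some (j div d)"
proof -
  obtain i where i: "pick F (parent u) = Some i" "child_choice F u i = Some j"
    using assms pick_nonroot[of u F] by (cases "pick F (parent u)") auto
  then obtain t where "t < d" "j = i*d + t"
    unfolding child_choice_eq_Some_iff by blast
  then show ?thesis using i(1) d_pos by simp
qed

lemma pick_eq_None_if_root_notin: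
  assumes "\<phi> (x, 0) \<notin> F" "u \<in> P"
  shows "pick F u = None"
  using assms(2) by (induction rule: parent_induct) (use assms(1) pick_root pick_nonroot in auto)

definition accepted :: "'c set set \<Rightarrow> 'c set set" where
  "accepted F = {\<phi> (u, j) | u j. u \<in> P \<and> pick F u = Some j}"

text \<open>The queries answered negatively: the root copy, or a child copy queried before the
  accepted one (all d child copies if none was accepted).\<close>
definition rejected :: "'c set set \<Rightarrow> 'c set set" where
  "rejected F = (if pick F x = None then {\<phi> (x, 0)} else {}) \<union>
     {\<phi> (u, i*d + s) | u i s. u \<in> P \<and> u \<noteq> x \<and> pick F (parent u) = Some i \<and> s < d \<and>
        (\<forall>j. pick F u = Some j \<longrightarrow> i*d + s < j)}"

lemma acceptedI: "u \<in> P \<Longrightarrow> pick F u = Some j \<Longrightarrow> \<phi> (u, j) \<in> accepted F"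
  unfolding accepted_def by blast

lemma rejected_childI:
  assumes "u \<in> P" "u \<noteq> x" "pick F (parent u) = Some i" "s < d"
    and "\<forall>j. pick F u = Some j \<longrightarrow> i*d + s < j"
  shows "\<phi> (u, i*d + s) \<in> rejected F"
  unfolding rejected_def using assms by blast

definition queried :: "'c set set \<Rightarrow> 'c set set" where
  "queried F = accepted F \<union> rejected F"

lemma accepted_subset: "accepted F \<subseteq> F"
  unfolding accepted_def using pick_SomeD by blast

lemma rejected_disjoint: "rejected F \<inter> F = {}"
proof -
  have "\<phi> (u, i*d + s) \<notin> F"
    if "u \<in> P" "u \<noteq> x" "pick F (parent u) = Some i" "s < d"
       "\<forall>j. pick F u = Some j \<longrightarrow> i*d + s < j" for u i s
  proof (cases "child_choice F u i")
    case None
    then show ?thesis using that(4) unfolding child_choice_eq_None_iff by blast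
  next
    case (Some j)
    then have "pick F u = Some j" using pick_nonroot[OF that(1,2)] that(3) by simp
    then have "i*d + s < j" using that(5) by blast
    then show ?thesis using Some unfolding child_choice_eq_Some_iff by auto
  qed
  then show ?thesis unfolding rejected_def using pick_root[of F] by (auto split: if_splits)
qed

lemma queried_subset_embedding: "queried F \<subseteq> \<phi> ` blowup_vertices P x d"
proof -
  have "\<phi> (u, i*d + s) \<in> \<phi> ` blowup_vertices P x d"
    if "u \<in> P" "u \<noteq> x" "pick F (parent u) = Some i" "s < d" for u i s
  proof -
    have "i < d ^ hdist P x (parent u)"
      using pick_SomeD[OF parent_in[OF that(1,2)] that(3)] unfolding blowup_vertices_def by auto
    then show ?thesis using child_in_blowup[OF that(1,2) _ that(4)] by blast
  qed
  moreover have "(x, 0) \<in> blowup_vertices P x d"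
    using root_in unfolding blowup_vertices_def by (simp add: hdist_root)
  ultimately have "rejected F \<subseteq> \<phi> ` blowup_vertices P x d"
    unfolding rejected_def by auto
  moreover have "accepted F \<subseteq> \<phi> ` blowup_vertices P x d"
    unfolding accepted_def using pick_SomeD by blast
  ultimately show ?thesis unfolding queried_def by blast
qed

lemma queried_subset: "queried F \<subseteq> U"
  using queried_subset_embedding embedding_in by blast

lemma finite_queried: "finite (queried F)"
  using queried_subset_embedding by (rule finite_subset) (simp add: finite_blowup_vertices finite_P)

lemma card_accepted_le: "card (accepted F) \<le> card P"
proof -
  have "accepted F \<subseteq> (\<lambda>u. \<phi> (u, the (pick F u))) ` P"
    unfolding accepted_def by force
  then show ?thesis
    using finite_P by (meson card_image_le card_mono finite_imageI le_trans)
qed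

lemma queried_nonempty: "queried F \<noteq> {}"
  using pick_root[of F] root_in unfolding queried_def accepted_def rejected_def
  by (cases "pick F x") auto

lemma child_queried:
  assumes "u \<in> P" "u \<noteq> x" "pick F (parent u) = Some i" "t < d"
    and "\<forall>s<t. \<phi> (u, i*d + s) \<notin> F"
  shows "\<phi> (u, i*d + t) \<in> queried F"
proof (cases "child_choice F u i")
  case None
  then have "pick F u = None" using pick_nonroot[OF assms(1,2)] assms(3) by simp
  then show ?thesis using rejected_childI[OF assms(1-4)] unfolding queried_def by simp
next
  case (Some j)
  then have pick_u: "pick F u = Some j" using pick_nonroot[OF assms(1,2)] assms(3) by simp
  obtain t0 where t0: "j = i*d + t0" "\<phi> (u, i*d + t0) \<in> F"
    using Some unfolding child_choice_eq_Some_iff by blast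
  then have "t \<le> t0" using assms(5) by (meson not_le)
  then consider "t = t0" | "i*d + t < j" using t0(1) by linarith
  then show ?thesis
  proof cases
    case 1
    then show ?thesis using acceptedI[OF assms(1) pick_u] t0(1) unfolding queried_def by simp
  next
    case 2
    then show ?thesis
      using rejected_childI[OF assms(1-4)] pick_u unfolding queried_def by simp
  qed
qed

lemma pick_cong:
  assumes agree: "F' \<inter> queried F = F \<inter> queried F" and "u \<in> P"
  shows "pick F' u = pick F u"
  using \<open>u \<in> P\<close>
proof (induction rule: parent_induct)
  case root
  have "\<phi> (x, 0) \<in> queried F"
    using pick_root[of F] root_in unfolding queried_def accepted_def rejected_def
    by (cases "pick F x") auto
  then have "(\<phi> (x, 0) \<in> F') = (\<phi> (x, 0) \<in> F)" using agree by blast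
  then show ?case by (simp add: pick_root)
next
  case (parent u)
  show ?case
  proof (cases "pick F (parent u)")
    case (Some i)
    then have "child_choice F' u i = child_choice F u i"
      using agree child_queried[OF parent.hyps(1,2) Some] by (intro child_choice_cong) blast
    then show ?thesis using pick_nonroot[OF parent.hyps(1,2)] parent.IH Some by simp
  qed (use pick_nonroot[OF parent.hyps(1,2)] parent.IH in simp)
qed

lemma queried_cong:
  assumes "F' \<inter> queried F = F \<inter> queried F"
  shows "accepted F' = accepted F" "rejected F' = rejected F"
proof -
  have pick_eq: "pick F' u = pick F u" if "u \<in> P" for u
    using pick_cong[OF assms that] .
  have "(u \<in> P \<and> pick F' u = Some j) = (u \<in> P \<and> pick F u = Some j)" for u j
    using pick_eq by auto
  then show "accepted F' = accepted F"
    unfolding accepted_def by (simp only:)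
  have "(u \<in> P \<and> u \<noteq> x \<and> pick F' (parent u) = Some i \<and> s < d \<and> (\<forall>j. pick F' u = Some j \<longrightarrow> i*d + s < j))
    = (u \<in> P \<and> u \<noteq> x \<and> pick F (parent u) = Some i \<and> s < d \<and> (\<forall>j. pick F u = Some j \<longrightarrow> i*d + s < j))"
    for u i s
    by (cases "u \<in> P \<and> u \<noteq> x") (simp add: pick_eq parent_in, blast)
  then show "rejected F' = rejected F"
    unfolding rejected_def pick_eq[OF root_in] by (simp only:)
qed

lemma pick_total_imp_copy:
  assumes total: "\<forall>u\<in>P. pick F u \<noteq> None"
  shows "contains_copy F P"
proof -
  define \<psi> where "\<psi> u = \<phi> (u, the (pick F u))" for u
  have picked: "(u, the (pick F u)) \<in> blowup_vertices P x d \<and> \<psi> u \<in> F" if "u \<in> P" for u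
    using pick_SomeD[OF that] total that unfolding \<psi>_def by fastforce
  have "inj_on \<psi> P"
    using embedding_inj picked unfolding \<psi>_def inj_on_def by blast
  moreover have "\<psi> A \<subseteq> \<psi> B" if hasse: "hasse P A B" for A B
  proof -
    have "A \<in> P" "B \<in> P" using hasse unfolding hasse_def by auto
    then obtain jA jB where j: "pick F A = Some jA" "pick F B = Some jB" using total by blast
    have vertices: "(A, jA) \<in> blowup_vertices P x d" "(B, jB) \<in> blowup_vertices P x d"
      using picked[OF \<open>A \<in> P\<close>] picked[OF \<open>B \<in> P\<close>] j by auto
    from hasse_imp_parent[OF hasse] consider "A \<noteq> x" "parent A = B" | "B \<noteq> x" "parent B = A"
      by blast
    then have "blowup_hasse P x d (A, jA) (B, jB)"
    proof cases
      case 1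
      then have "jB = jA div d" "hdist P x B + 1 = hdist P x A"
        using pick_parent[OF \<open>A \<in> P\<close> 1(1) j(1)] j(2) hdist_parent[OF \<open>A \<in> P\<close> 1(1)] by auto
      then show ?thesis unfolding blowup_hasse_def using vertices hasse by auto
    next
      case 2
      then have "jA = jB div d" "hdist P x A + 1 = hdist P x B"
        using pick_parent[OF \<open>B \<in> P\<close> 2(1) j(2)] j(1) hdist_parent[OF \<open>B \<in> P\<close> 2(1)] by auto
      then show ?thesis unfolding blowup_hasse_def using vertices hasse by auto
    qed
    then show "\<psi> A \<subseteq> \<psi> B" using embedding_mono j unfolding \<psi>_def by force
  qed
  then have "\<forall>A\<in>P. \<forall>B\<in>P. A \<subseteq> B \<longrightarrow> \<psi> A \<subseteq> \<psi> B"
    using hasse_mono_imp_mono[OF finite_P] by blast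
  ultimately show ?thesis
    unfolding contains_copy_def using picked by blast
qed

lemma ex_stuck_vertex:
  assumes "P_free P F" "accepted F \<noteq> {}"
  obtains u i where "u \<in> P" "u \<noteq> x" "pick F u = None" "pick F (parent u) = Some i"
proof -
  have "\<exists>u. u \<in> P \<and> pick F u = None"
  proof (rule ccontr)
    assume "\<nexists>u. u \<in> P \<and> pick F u = None"
    then have "\<forall>u\<in>P. pick F u \<noteq> None" by metis
    then have "contains_copy F P" by (rule pick_total_imp_copy)
    then show False using assms(1) unfolding P_free_def by metis
  qed
  then obtain u where u: "u \<in> P" "pick F u = None"
    and u_min: "\<forall>v. v \<in> P \<and> pick F v = None \<longrightarrow> hdist P x u \<le> hdist P x v"
    using ex_has_least_nat[of "\<lambda>u. u \<in> P \<and> pick F u = None" _ "hdist P x"] by metis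
  have "\<phi> (x, 0) \<in> F"
  proof (rule ccontr)
    assume "\<phi> (x, 0) \<notin> F"
    then have "accepted F = {}"
      unfolding accepted_def using pick_eq_None_if_root_notin by force
    then show False using assms(2) by metis
  qed
  then have "u \<noteq> x" using u(2) by (auto simp: pick_root)
  have "pick F (parent u) \<noteq> None"
  proof
    assume "pick F (parent u) = None"
    then have "hdist P x u \<le> hdist P x (parent u)"
      using u_min parent_in[OF u(1) \<open>u \<noteq> x\<close>] by metis
    then show False using hdist_parent[OF u(1) \<open>u \<noteq> x\<close>] by linarith
  qed
  then show ?thesis using that u \<open>u \<noteq> x\<close> by blast
qed

text \<open>All d candidate copies of a stuck vertex are rejected.\<close>
lemma card_rejected_ge:
  assumes "P_free P F" "accepted F \<noteq> {}"
  shows "d \<le> card (rejected F)"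
proof -
  obtain u i where u: "u \<in> P" "u \<noteq> x" "pick F u = None" and i: "pick F (parent u) = Some i"
    using ex_stuck_vertex[OF assms] .
  have i_less: "i < d ^ hdist P x (parent u)"
    using pick_SomeD[OF parent_in[OF u(1,2)] i] unfolding blowup_vertices_def by auto
  have "inj_on (\<lambda>s. \<phi> (u, i*d + s)) {..<d}"
  proof (rule inj_onI)
    fix s t assume s_t: "s \<in> {..<d}" "t \<in> {..<d}" and eq: "\<phi> (u, i*d + s) = \<phi> (u, i*d + t)"
    have "(u, i*d + s) \<in> blowup_vertices P x d" "(u, i*d + t) \<in> blowup_vertices P x d"
      using child_in_blowup[OF u(1,2) i_less] s_t by auto
    then have "(u, i*d + s) = (u, i*d + t)" by (rule inj_onD[OF embedding_inj eq])
    then show "s = t" by simp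
  qed
  then have "card ((\<lambda>s. \<phi> (u, i*d + s)) ` {..<d}) = d" by (simp add: card_image)
  moreover have "(\<lambda>s. \<phi> (u, i*d + s)) ` {..<d} \<subseteq> rejected F"
  proof
    fix e assume "e \<in> (\<lambda>s. \<phi> (u, i*d + s)) ` {..<d}"
    then obtain s where "s < d" "e = \<phi> (u, i*d + s)" by auto
    then show "e \<in> rejected F" using rejected_childI[OF u(1,2) i, of s] u(3) by simp
  qed
  moreover have "finite (rejected F)"
    using finite_queried unfolding queried_def by simp
  ultimately show ?thesis by (metis card_mono)
qed

lemma card_queried: "card (queried F) = card (accepted F) + card (rejected F)"
  unfolding queried_def using finite_queried[of F] accepted_subset rejected_disjoint
  by (intro card_Un_disjoint) (auto simp: queried_def)

lemma card_unqueried: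
  assumes "finite U"
  shows "card U = card (U - queried F) + card (accepted F) + card (rejected F)"
proof -
  have "card (U - queried F) = card U - card (queried F)"
    using finite_queried queried_subset by (rule card_Diff_subset)
  moreover have "card (queried F) \<le> card U"
    using assms queried_subset by (rule card_mono)
  ultimately show ?thesis using card_queried[of F] by simp
qed

lemma queried_Un_accepted:
  assumes "S' \<inter> queried F = {}"
  shows "accepted (S' \<union> accepted F) = accepted F" "queried (S' \<union> accepted F) = queried F"
    and "(S' \<union> accepted F) - queried (S' \<union> accepted F) = S'"
    and "finite S' \<Longrightarrow> card (S' \<union> accepted F) = card S' + card (accepted F)"
proof -
  have "accepted F \<subseteq> queried F" "F \<inter> queried F = accepted F"
    using accepted_subset rejected_disjoint unfolding queried_def by blast+
  then have "(S' \<union> accepted F) \<inter> queried F = F \<inter> queried F"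
    using assms by blast
  then show "accepted (S' \<union> accepted F) = accepted F" and queried: "queried (S' \<union> accepted F) = queried F"
    using queried_cong[of "S' \<union> accepted F" F] unfolding queried_def by simp_all
  show "(S' \<union> accepted F) - queried (S' \<union> accepted F) = S'"
    unfolding queried using assms \<open>accepted F \<subseteq> queried F\<close> by blast
  have "finite (accepted F)" using finite_queried[of F] unfolding queried_def by simp
  then show "finite S' \<Longrightarrow> card (S' \<union> accepted F) = card S' + card (accepted F)"
    using assms \<open>accepted F \<subseteq> queried F\<close> by (intro card_Un_disjoint) blast+
qed

lemma fingerprint_budget_step:
  assumes "finite U" "P_free P F"
    and "real (card S') \<le> real (card P) * real (card (U - queried F)) / real d"
  shows "real (card S') + real (card (accepted F)) \<le> real (card P) * real (card U) / real d"
proof -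
  have "real (card (accepted F)) = 0 \<or> real d \<le> real (card (rejected F))"
    using card_rejected_ge[OF assms(2)] by (cases "accepted F = {}") auto
  then have "real (card S') + real (card (accepted F)) \<le> real (card P) *
      (real (card (U - queried F)) + real (card (accepted F)) + real (card (rejected F))) / real d"
    by (intro fingerprint_budget[OF _ _ _ _ _ assms(3)]) (use card_accepted_le[of F] d_pos in auto)
  then show ?thesis using card_unqueried[OF assms(1), of F] by simp
qed

end

definition is_container_map ::
    "'a set set \<Rightarrow> nat \<Rightarrow> real \<Rightarrow> 'c set set \<Rightarrow> ('c set set \<Rightarrow> 'c set set) \<Rightarrow> bool" where
  "is_container_map P D R U C \<longleftrightarrow>
     (\<forall>F\<subseteq>U. P_free P F \<longrightarrow> (\<exists>S\<subseteq>F. real (card S) \<le> real (card P) * real (card U) / real D \<and>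
        F \<subseteq> C S \<and> finite (C S) \<and> real (card (C S)) < R + real (card S)))"

text \<open>The sets accepted by the exploration of F join the fingerprint, the rest of which, like the
  container, comes from the unqueried sets. Since the exploration depends only on the answers to
  its own queries, it accepts the same sets when run on the fingerprint.\<close>
lemma (in blowup_embedding) container_map_step:
  assumes "finite U"
    and smaller: "\<And>U'. U' \<subset> U \<Longrightarrow> is_container_map P d R U' (C U')"
  shows "is_container_map P d R U (\<lambda>S. accepted S \<union> C (U - queried S) (S - queried S))"
  unfolding is_container_map_def
proof (intro allI impI)
  fix F assume "F \<subseteq> U" "P_free P F"
  define U' where "U' = U - queried F"
  obtain e where "e \<in> queried F" using queried_nonempty by blast
  then have "U' \<subset> U" using queried_subset unfolding U'_def by blast
  then have container: "is_container_map P d R U' (C U')" by (rule smaller)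
  have "F \<inter> U' \<subseteq> U'" "P_free P (F \<inter> U')"
    using P_free_subset[OF \<open>P_free P F\<close>] by auto
  then have "\<exists>S'\<subseteq>F \<inter> U'. real (card S') \<le> real (card P) * real (card U') / real d \<and>
      F \<inter> U' \<subseteq> C U' S' \<and> finite (C U' S') \<and> real (card (C U' S')) < R + real (card S')"
    using container unfolding is_container_map_def by blast
  then obtain S' where S': "S' \<subseteq> F \<inter> U'"
    "real (card S') \<le> real (card P) * real (card U') / real d"
    "F \<inter> U' \<subseteq> C U' S'" "finite (C U' S')" "real (card (C U' S')) < R + real (card S')"
    by blast
  have S'_disjoint: "S' \<inter> queried F = {}" using S'(1) unfolding U'_def by blast
  have "finite S'" using S'(1) \<open>finite U\<close> unfolding U'_def by (meson Diff_subset finite_subset le_infE)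
  define S where "S = S' \<union> accepted F"
  have C_S: "accepted S \<union> C (U - queried S) (S - queried S) = accepted F \<union> C U' S'"
    unfolding S_def queried_Un_accepted(3)[OF S'_disjoint]
    unfolding queried_Un_accepted(1,2)[OF S'_disjoint] U'_def ..
  have card_S: "card S = card S' + card (accepted F)"
    unfolding S_def using queried_Un_accepted(4)[OF S'_disjoint \<open>finite S'\<close>] .
  show "\<exists>S\<subseteq>F. real (card S) \<le> real (card P) * real (card U) / real d \<and>
      F \<subseteq> accepted S \<union> C (U - queried S) (S - queried S) \<and>
      finite (accepted S \<union> C (U - queried S) (S - queried S)) \<and>
      real (card (accepted S \<union> C (U - queried S) (S - queried S))) < R + real (card S)"
  proof (rule exI[of _ S], unfold C_S, intro conjI)
    show "S \<subseteq> F" using S'(1) accepted_subset unfolding S_def by blast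
    show "real (card S) \<le> real (card P) * real (card U) / real d"
      using fingerprint_budget_step[OF \<open>finite U\<close> \<open>P_free P F\<close> S'(2)[unfolded U'_def]]
      unfolding card_S by simp
    show "F \<subseteq> accepted F \<union> C U' S'"
      using \<open>F \<subseteq> U\<close> S'(3) rejected_disjoint unfolding U'_def queried_def by blast
    show "finite (accepted F \<union> C U' S')" using finite_queried[of F] S'(4) by (simp add: queried_def)
    have "card (accepted F \<union> C U' S') \<le> card (accepted F) + card (C U' S')"
      by (rule card_Un_le)
    then show "real (card (accepted F \<union> C U' S')) < R + real (card S)"
      using S'(5) card_S by linarith
  qed
qed

lemma container_map_exists:
  assumes "rooted_tree_poset P x" "finite V" "D > 0"
    and blowup: "\<And>U. U \<subseteq> V \<Longrightarrow> R \<le> real (card U) \<Longrightarrow> contains_blowup U P x D"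
    and "U \<subseteq> V"
  shows "\<exists>C. is_container_map P D R U C"
  using \<open>U \<subseteq> V\<close>
proof (induction "card U" arbitrary: U rule: less_induct)
  case less
  have "finite U" using less.prems \<open>finite V\<close> by (rule finite_subset)
  show ?case
  proof (cases "real (card U) < R")
    case True
    then have "is_container_map P D R U (\<lambda>_. U)"
      unfolding is_container_map_def using \<open>finite U\<close> by (auto intro!: exI[of _ "{}"])
    then show ?thesis by blast
  next
    case False
    then obtain \<phi> where "\<phi> ` blowup_vertices P x D \<subseteq> U" "inj_on \<phi> (blowup_vertices P x D)"
      "\<And>a b. blowup_hasse P x D a b \<Longrightarrow> \<phi> a \<subseteq> \<phi> b"
      using blowup[OF less.prems] unfolding contains_blowup_def by auto
    then interpret blowup_embedding P x D \<phi> U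
      using assms(1,3) by (simp add: blowup_embedding_def blowup_embedding_axioms_def)
    have "\<forall>U'. \<exists>C. U' \<subset> U \<longrightarrow> is_container_map P D R U' C"
      using less psubset_card_mono[OF \<open>finite U\<close>] by (meson order.trans psubset_imp_subset)
    then obtain C where "\<And>U'. U' \<subset> U \<Longrightarrow> is_container_map P D R U' (C U')"
      by metis
    then show ?thesis using container_map_step[OF \<open>finite U\<close>] by blast
  qed
qed

lemma sum_binomial_le_exp:
  assumes "1 \<le> m" "m \<le> N"
  shows "(\<Sum>k\<le>m. real (N choose k)) \<le> (real N / real m) ^ m * exp (real m)"
proof -
  define l where "l = real m / real N"
  have l: "0 < l" "l \<le> 1" using assms unfolding l_def by auto
  have "(\<Sum>k\<le>m. real (N choose k)) \<le> (\<Sum>k\<le>m. real (N choose k) * (l ^ k / l ^ m))"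
  proof (rule sum_mono)
    fix k assume "k \<in> {..m}"
    then have "1 \<le> l ^ k / l ^ m" using l by (simp add: power_decreasing)
    then show "real (N choose k) \<le> real (N choose k) * (l ^ k / l ^ m)"
      by (metis mult.right_neutral mult_left_mono of_nat_0_le_iff)
  qed
  also have "\<dots> = (\<Sum>k\<le>m. real (N choose k) * l ^ k) / l ^ m"
    by (simp add: sum_divide_distrib)
  also have "\<dots> \<le> (\<Sum>k\<le>N. real (N choose k) * l ^ k) / l ^ m"
    using l assms(2) by (intro divide_right_mono sum_mono2) auto
  also have "(\<Sum>k\<le>N. real (N choose k) * l ^ k) = (l + 1) ^ N"
    using binomial_ring[of l 1 N] by simp
  also have "(l + 1) ^ N \<le> exp l ^ N"
    using l by (intro power_mono) (auto simp: add.commute)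
  also have "exp l ^ N = exp (real m)"
    using assms unfolding l_def by (simp add: exp_of_nat_mult[symmetric])
  also have "exp (real m) / l ^ m = (real N / real m) ^ m * exp (real m)"
    unfolding l_def by (simp add: power_divide)
  finally show ?thesis using l by (simp add: divide_right_mono)
qed

lemma card_subsets_card_le:
  assumes "finite V" "1 \<le> m" "m \<le> card V"
  shows "real (card {S. S \<subseteq> V \<and> card S \<le> m}) \<le> (real (card V) / real m) ^ m * exp (real m)"
proof -
  have "{S. S \<subseteq> V \<and> card S \<le> m} = (\<Union>k\<in>{..m}. {S. S \<subseteq> V \<and> card S = k})" by auto
  then have "card {S. S \<subseteq> V \<and> card S \<le> m} \<le> (\<Sum>k\<le>m. card {S. S \<subseteq> V \<and> card S = k})"
    by (simp only: card_UN_le finite_atMost)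
  also have "\<dots> = (\<Sum>k\<le>m. card V choose k)" using n_subsets[OF assms(1)] by simp
  finally have "real (card {S. S \<subseteq> V \<and> card S \<le> m}) \<le> (\<Sum>k\<le>m. real (card V choose k))"
    by (metis of_nat_le_iff of_nat_sum)
  also have "\<dots> \<le> (real (card V) / real m) ^ m * exp (real m)"
    using assms(2,3) by (rule sum_binomial_le_exp)
  finally show ?thesis .
qed

lemma card_le_fingerprints_containers:
  assumes "finite V" "1 \<le> m" "m \<le> card V"
    and covered: "\<And>F. F \<in> \<F> \<Longrightarrow> \<exists>S\<subseteq>V. card S \<le> m \<and> F \<subseteq> C S \<and> finite (C S) \<and> real (card (C S)) \<le> c"
  shows "real (card \<F>) \<le> (real (card V) / real m) ^ m * exp (real m) * 2 powr c"
proof -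
  define \<S> where "\<S> = {S. S \<subseteq> V \<and> card S \<le> m \<and> finite (C S) \<and> real (card (C S)) \<le> c}"
  have "\<S> \<subseteq> {S. S \<subseteq> V \<and> card S \<le> m}" unfolding \<S>_def by blast
  moreover have "finite {S. S \<subseteq> V \<and> card S \<le> m}" using \<open>finite V\<close> by simp
  ultimately have fin: "finite \<S>" and card_\<S>: "card \<S> \<le> card {S. S \<subseteq> V \<and> card S \<le> m}"
    by (auto intro: finite_subset card_mono)
  have "\<F> \<subseteq> (\<Union>S\<in>\<S>. Pow (C S))" using covered unfolding \<S>_def by blast
  moreover have "finite (\<Union>S\<in>\<S>. Pow (C S))" using fin unfolding \<S>_def by auto
  ultimately have "card \<F> \<le> card (\<Union>S\<in>\<S>. Pow (C S))" by (rule card_mono[rotated])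
  also have "\<dots> \<le> (\<Sum>S\<in>\<S>. card (Pow (C S)))" by (rule card_UN_le[OF fin])
  finally have "real (card \<F>) \<le> (\<Sum>S\<in>\<S>. real (card (Pow (C S))))"
    by (metis of_nat_le_iff of_nat_sum)
  also have "\<dots> \<le> (\<Sum>S\<in>\<S>. 2 powr c)"
  proof (rule sum_mono)
    fix S assume "S \<in> \<S>"
    then have "real (card (Pow (C S))) = 2 powr real (card (C S))" "real (card (C S)) \<le> c"
      unfolding \<S>_def by (auto simp: card_Pow powr_realpow)
    then show "real (card (Pow (C S))) \<le> 2 powr c" by simp
  qed
  also have "\<dots> = real (card \<S>) * 2 powr c" by simp
  also have "\<dots> \<le> (real (card V) / real m) ^ m * exp (real m) * 2 powr c"
    using card_\<S> card_subsets_card_le[OF assms(1-3)] by (intro mult_right_mono) auto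
  finally show ?thesis .
qed

lemma log2_fingerprint_count:
  assumes "0 < q"
  shows "log 2 (q ^ m * exp (real m) * 2 powr (c + real m)) = c + real m * log 2 (2 * exp 1 * q)"
proof -
  have "log 2 (q ^ m * exp (real m) * 2 powr (c + real m))
      = log 2 (q ^ m) + log 2 (exp (real m)) + log 2 (2 powr (c + real m))"
    using assms by (simp add: log_mult_pos)
  moreover have "log 2 (q ^ m) = real m * log 2 q"
    using assms by (simp add: log_nat_power)
  moreover have "log 2 (exp (real m)) = real m * log 2 (exp 1)"
    by (simp add: log_def)
  moreover have "log 2 (2 powr (c + real m)) = c + real m"
    by simp
  moreover have "log 2 (2 * exp 1 * q) = 1 + log 2 (exp 1) + log 2 q"
  proof -
    have "log 2 (2 * exp 1) = 1 + log 2 (exp 1)" by (subst log_mult_pos) simp_all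
    moreover have "log 2 (2 * exp 1 * q) = log 2 (2 * exp 1) + log 2 q"
      by (rule log_mult_pos) (use assms in simp_all)
    ultimately show ?thesis by simp
  qed
  ultimately show ?thesis by (simp add: algebra_simps)
qed

lemma P_free_empty: "P \<noteq> {} \<Longrightarrow> P_free P {}"
  unfolding P_free_def contains_copy_def by auto

lemma log_card_P_free_le:
  assumes "P \<noteq> {}" "finite V" "1 \<le> m" "m \<le> card V" "is_container_map P D R V C"
    and "real (card P) * real (card V) / real D \<le> real m"
  shows "log 2 (real (card {F. F \<subseteq> V \<and> P_free P F}))
           \<le> R + real m * log 2 (2 * exp 1 * (real (card V) / real m))"
proof -
  let ?\<F> = "{F. F \<subseteq> V \<and> P_free P F}"
  let ?q = "real (card V) / real m"
  have "\<exists>S\<subseteq>V. card S \<le> m \<and> F \<subseteq> C S \<and> finite (C S) \<and> real (card (C S)) \<le> R + real m"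
    if "F \<in> ?\<F>" for F
  proof -
    from that have "F \<subseteq> V" "P_free P F" by simp_all
    then obtain S where S: "S \<subseteq> F" "real (card S) \<le> real (card P) * real (card V) / real D"
      "F \<subseteq> C S" "finite (C S)" "real (card (C S)) < R + real (card S)"
      using assms(5)[unfolded is_container_map_def, rule_format] by blast
    then have "card S \<le> m" "real (card (C S)) \<le> R + real m" using assms(6) by linarith+
    then show ?thesis using S \<open>F \<subseteq> V\<close> by (intro exI[of _ S]) simp
  qed
  then have "real (card ?\<F>) \<le> ?q ^ m * exp (real m) * 2 powr (R + real m)"
    by (rule card_le_fingerprints_containers[OF assms(2-4)])
  moreover have "1 \<le> real (card ?\<F>)"
  proof -
    have "?\<F> \<subseteq> Pow V" by blast
    then have "finite ?\<F>" by (rule finite_subset) (simp add: assms(2))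
    moreover have "{} \<in> ?\<F>" using P_free_empty[OF assms(1)] by simp
    ultimately have "card ?\<F> \<noteq> 0" by (auto simp: card_eq_0_iff)
    then show ?thesis by simp
  qed
  moreover have "0 < ?q" using assms(3,4) by simp
  ultimately have "log 2 (real (card ?\<F>)) \<le> log 2 (?q ^ m * exp (real m) * 2 powr (R + real m))"
    by (subst log_le_cancel_iff) auto
  also have "\<dots> = R + real m * log 2 (2 * exp 1 * ?q)"
    using \<open>0 < ?q\<close> by (rule log2_fingerprint_count)
  finally show ?thesis .
qed

lemma binomial_Suc_central: "Suc k * ((2*k + 1) choose k) = (2*k + 1) * ((2*k) choose k)"
  using binomial_absorption[of k "2*k + 1"] binomial_symmetric[of k "2*k + 1"] by simp

lemma binomial_central_Suc: "(2*k + 2) choose (k + 1) = 2 * ((2*k + 1) choose k)"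
  using binomial_Suc_Suc[of "2*k + 1" k] binomial_symmetric[of k "2*k + 1"] by simp

lemma sixteen_power_le_central_binomial_sq:
  "1 \<le> k \<Longrightarrow> (16::nat) ^ k \<le> 4 * k * ((2*k) choose k)\<^sup>2"
proof (induction k rule: dec_induct)
  case base
  then show ?case by (simp add: numeral_eq_Suc)
next
  case (step k)
  let ?b = "(2*k) choose k" and ?b' = "(2*(k + 1)) choose (k + 1)"
  have b': "(k + 1) * ?b' = 2 * (2*k + 1) * ?b"
    using binomial_central_Suc[of k] binomial_Suc_central[of k] by (simp add: algebra_simps)
  have "4 * k * (k + 1) \<le> (2*k + 1)\<^sup>2" by (simp add: power2_eq_square algebra_simps)
  then have "4 * k * (k + 1) * ?b\<^sup>2 \<le> (2*k + 1)\<^sup>2 * ?b\<^sup>2" by (rule mult_right_mono) simp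
  have "16 ^ (k + 1) * (k + 1) = 16 * (16 ^ k * (k + 1))" by simp
  also have "\<dots> \<le> 16 * (4 * k * ?b\<^sup>2 * (k + 1))" using mult_right_mono[OF step.IH, of "k + 1"] by simp
  also have "\<dots> \<le> 16 * ((2*k + 1)\<^sup>2 * ?b\<^sup>2)"
    using \<open>4 * k * (k + 1) * ?b\<^sup>2 \<le> _\<close> by (simp add: algebra_simps)
  also have "\<dots> = 4 * ((k + 1) * ?b')\<^sup>2" unfolding b' by (simp add: power2_eq_square algebra_simps)
  also have "\<dots> = (4 * (k + 1) * ?b'\<^sup>2) * (k + 1)" by (simp add: power2_eq_square algebra_simps)
  finally show ?case by (simp del: mult_Suc mult_Suc_right)
qed

lemma four_power_le_central_binomial_sq:
  assumes "1 \<le> n"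
  shows "(4::nat) ^ n \<le> 16 * n * (n choose (n div 2))\<^sup>2"
proof (cases "even n")
  case True
  then obtain k where n: "n = 2*k" by (rule evenE)
  then have "(4::nat) ^ n = 16 ^ k" by (simp add: power_mult)
  also have "\<dots> \<le> 4 * k * ((2*k) choose k)\<^sup>2"
    using assms n by (intro sixteen_power_le_central_binomial_sq) simp
  also have "\<dots> \<le> 16 * n * (n choose (n div 2))\<^sup>2" using n by simp
  finally show ?thesis .
next
  case False
  then obtain k where n: "n = 2*k + 1" by (rule oddE)
  show ?thesis
  proof (cases "k = 0")
    case False
    let ?b = "(2*k) choose k" and ?c = "(2*k + 1) choose k"
    have "Suc k * ?b \<le> Suc k * ?c"
      unfolding binomial_Suc_central by (intro mult_right_mono) auto
    then have "?b\<^sup>2 \<le> ?c\<^sup>2" by (simp only: Suc_mult_le_cancel1 power_mono)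
    have "(4::nat) ^ n = 4 * 16 ^ k" unfolding n by (simp add: power_mult)
    also have "\<dots> \<le> 4 * (4 * k * ?b\<^sup>2)"
      using sixteen_power_le_central_binomial_sq[of k] False by simp
    also have "\<dots> = (16 * k) * ?b\<^sup>2" by simp
    also have "\<dots> \<le> (16 * n) * ?c\<^sup>2"
      using \<open>?b\<^sup>2 \<le> ?c\<^sup>2\<close> n by (intro mult_mono) auto
    finally show ?thesis using n by simp
  qed (use n in simp)
qed

lemma two_power_le_central_binomial:
  assumes "1 \<le> n"
  shows "(2::real) ^ n \<le> 4 * sqrt (real n) * real (n choose (n div 2))"
proof (rule power2_le_imp_le)
  have "((2::real) ^ n)\<^sup>2 = real ((4::nat) ^ n)"
    by (simp add: power_mult[symmetric] mult.commute[of n 2]) (simp add: power_mult)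
  also have "\<dots> \<le> real (16 * n * (n choose (n div 2))\<^sup>2)"
    using four_power_le_central_binomial_sq[OF assms] by (simp only: of_nat_le_iff)
  also have "\<dots> = (4 * sqrt (real n) * real (n choose (n div 2)))\<^sup>2"
    by (simp add: power_mult_distrib)
  finally show "((2::real) ^ n)\<^sup>2 \<le> (4 * sqrt (real n) * real (n choose (n div 2)))\<^sup>2" .
qed simp

lemma binomial_Suc_ge:
  assumes "0 < m" "2*m \<le> n"
  shows "real (n choose (m + j)) * (1 - (2 * real j + 1) / real m) \<le> real (n choose (m + Suc j))"
proof -
  have "Suc (m + j) * (n choose Suc (m + j)) = (n - (m + j)) * (n choose (m + j))"
    using binomial_absorption[of "m + j" n] binomial_absorb_comp[of n "m + j"] by simp
  then have "real (m + j + 1) * real (n choose (m + Suc j)) = real (n - (m + j)) * real (n choose (m + j))"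
    by (metis Suc_eq_plus1 add_Suc_right of_nat_mult)
  then have ratio: "real (n choose (m + Suc j))
      = real (n choose (m + j)) * (real (n - (m + j)) / real (m + j + 1))"
    by (simp add: field_simps)
  have "real (n - (m + j)) \<ge> real m - real j" using assms(2) by linarith
  then have "(real m - real j) / real (m + j + 1) \<le> real (n - (m + j)) / real (m + j + 1)"
    by (intro divide_right_mono) auto
  moreover have "1 - (2 * real j + 1) / real m \<le> (real m - real j) / real (m + j + 1)"
    using assms(1) by (simp add: field_simps)
  ultimately show ?thesis unfolding ratio by (intro mult_left_mono) auto
qed

lemma binomial_near_middle_ge:
  assumes "0 < m" "2*m \<le> n"
  shows "real (n choose m) * (1 - real j ^ 2 / real m) \<le> real (n choose (m + j))"
proof (induction j)
  case (Suc j)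
  show ?case
  proof (cases "real (Suc j) ^ 2 < real m")
    case True
    moreover have "2 * real j + 1 \<le> real (Suc j) ^ 2" by (simp add: power2_eq_square algebra_simps)
    ultimately have "0 \<le> 1 - (2 * real j + 1) / real m" using assms(1) by (simp add: field_simps)
    have "1 - real (Suc j) ^ 2 / real m \<le> (1 - real j ^ 2 / real m) * (1 - (2 * real j + 1) / real m)"
      using assms(1) by (simp add: field_simps power2_eq_square)
    then have "real (n choose m) * (1 - real (Suc j) ^ 2 / real m)
        \<le> real (n choose m) * (1 - real j ^ 2 / real m) * (1 - (2 * real j + 1) / real m)"
      by (simp add: mult_left_mono mult.assoc)
    also have "\<dots> \<le> real (n choose (m + j)) * (1 - (2 * real j + 1) / real m)"
      using Suc.IH \<open>0 \<le> 1 - (2 * real j + 1) / real m\<close> by (rule mult_right_mono)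
    also have "\<dots> \<le> real (n choose (m + Suc j))" by (rule binomial_Suc_ge[OF assms])
    finally show ?thesis .
  next
    case False
    then have "real (n choose m) * (1 - real (Suc j) ^ 2 / real m) \<le> 0"
      using assms(1) by (intro mult_nonneg_nonpos) (auto simp: field_simps)
    then show ?thesis by (smt (verit) of_nat_0_le_iff)
  qed
qed simp

lemma finite_chain_cards: "finite P \<Longrightarrow> finite {card C | C. C \<subseteq> P \<and> is_chain C}"
  by (rule finite_subset[of _ "{..card P}"]) (auto intro: card_mono)

lemma ex_chain_card_height:
  assumes "finite P"
  shows "\<exists>C\<subseteq>P. is_chain C \<and> card C = height P"
proof -
  have "card {} \<in> {card C | C. C \<subseteq> P \<and> is_chain C}"
    unfolding is_chain_def by (auto intro!: exI[of _ "{}"])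
  then have "height P \<in> {card C | C. C \<subseteq> P \<and> is_chain C}"
    unfolding height_def using finite_chain_cards[OF assms] by (intro Max_in) auto
  then show ?thesis by auto
qed

lemma height_ge_1:
  assumes "finite P" "P \<noteq> {}"
  shows "1 \<le> height P"
proof -
  obtain a where "a \<in> P" using assms(2) by blast
  then have "card {a} \<in> {card C | C. C \<subseteq> P \<and> is_chain C}"
    unfolding is_chain_def by (auto intro!: exI[of _ "{a}"])
  then have "card {a} \<le> height P"
    unfolding height_def using finite_chain_cards[OF assms(1)] by (rule Max_ge[rotated])
  then show ?thesis by simp
qed

lemma P_free_if_few_sizes:
  assumes "finite P" "\<forall>A\<in>F. finite A" "card ` F \<subseteq> I" "finite I" "card I < height P"
  shows "P_free P F"
  unfolding P_free_def contains_copy_def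
proof
  assume "\<exists>\<psi>. \<psi> ` P \<subseteq> F \<and> inj_on \<psi> P \<and> (\<forall>A\<in>P. \<forall>B\<in>P. A \<subseteq> B \<longrightarrow> \<psi> A \<subseteq> \<psi> B)"
  then obtain \<psi> where \<psi>: "\<psi> ` P \<subseteq> F" "inj_on \<psi> P" "\<forall>A\<in>P. \<forall>B\<in>P. A \<subseteq> B \<longrightarrow> \<psi> A \<subseteq> \<psi> B"
    by blast
  obtain C where C: "C \<subseteq> P" "is_chain C" "card C = height P"
    using ex_chain_card_height[OF assms(1)] by blast
  have "inj_on (card \<circ> \<psi>) C"
  proof (rule inj_onI)
    fix a b assume ab: "a \<in> C" "b \<in> C" and card_eq: "(card \<circ> \<psi>) a = (card \<circ> \<psi>) b"
    have "a \<in> P" "b \<in> P" using ab C(1) by auto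
    then have "finite (\<psi> a)" "finite (\<psi> b)" using assms(2) \<psi>(1) by auto
    have "a \<subseteq> b \<or> b \<subseteq> a" using C(2) ab unfolding is_chain_def by blast
    then have "\<psi> a = \<psi> b"
    proof
      assume "a \<subseteq> b"
      then have "\<psi> a \<subseteq> \<psi> b" using \<psi>(3) \<open>a \<in> P\<close> \<open>b \<in> P\<close> by blast
      then show ?thesis using card_subset_eq[OF \<open>finite (\<psi> b)\<close>] card_eq by simp
    next
      assume "b \<subseteq> a"
      then have "\<psi> b \<subseteq> \<psi> a" using \<psi>(3) \<open>a \<in> P\<close> \<open>b \<in> P\<close> by blast
      then have "\<psi> b = \<psi> a" using card_subset_eq[OF \<open>finite (\<psi> a)\<close>] card_eq by simp
      then show ?thesis by simp
    qed
    then show "a = b" using inj_onD[OF \<psi>(2)] \<open>a \<in> P\<close> \<open>b \<in> P\<close> by blast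
  qed
  then have "card ((card \<circ> \<psi>) ` C) = height P" using C(3) by (simp only: card_image)
  then have "height P = card ((card \<circ> \<psi>) ` C)" ..
  also have "\<dots> \<le> card I"
    by (rule card_mono[OF assms(4)]) (use assms(3) \<psi>(1) C(1) in fastforce)
  finally show False using assms(5) by simp
qed

lemma card_middle_layers_ge:
  assumes "0 < m" "2*m \<le> n"
  shows "real H * real (n choose m) * (1 - real H ^ 2 / real m)
           \<le> real (card (\<Union>j<H. {A. A \<subseteq> {1..n} \<and> card A = m + j}))"
proof -
  have "card (\<Union>j<H. {A. A \<subseteq> {1..n} \<and> card A = m + j})
      = (\<Sum>j<H. card {A. A \<subseteq> {1..n} \<and> card A = m + j})"
    by (rule card_UN_disjoint) auto
  also have "\<dots> = (\<Sum>j<H. n choose (m + j))" using n_subsets[of "{1..n}"] by simp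
  finally have "real (card (\<Union>j<H. {A. A \<subseteq> {1..n} \<and> card A = m + j}))
      = (\<Sum>j<H. real (n choose (m + j)))" by simp
  moreover have "(\<Sum>j<H. real (n choose m) * (1 - real H ^ 2 / real m)) \<le> (\<Sum>j<H. real (n choose (m + j)))"
  proof (rule sum_mono)
    fix j assume "j \<in> {..<H}"
    then have "real j ^ 2 / real m \<le> real H ^ 2 / real m"
      by (intro divide_right_mono power_mono) auto
    then have "real (n choose m) * (1 - real H ^ 2 / real m) \<le> real (n choose m) * (1 - real j ^ 2 / real m)"
      by (intro mult_left_mono) auto
    also have "\<dots> \<le> real (n choose (m + j))" by (rule binomial_near_middle_ge[OF assms])
    finally show "real (n choose m) * (1 - real H ^ 2 / real m) \<le> real (n choose (m + j))" .
  qed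
  ultimately show ?thesis by simp
qed

definition free_families :: "'a set set \<Rightarrow> nat \<Rightarrow> nat set set set" where
  "free_families P n = {F. F \<subseteq> Pow {1..n} \<and> P_free P F}"

lemma finite_free_families: "finite (free_families P n)"
  unfolding free_families_def by (rule finite_subset[of _ "Pow (Pow {1..n})"]) auto

lemma log_card_free_families_ge:
  assumes "finite P" "P \<noteq> {}" "0 < n div 2"
  defines "H \<equiv> height P - 1"
  shows "real H * (1 - real H ^ 2 / real (n div 2))
           \<le> log 2 (real (card (free_families P n))) / real (n choose (n div 2))"
proof -
  define L where "L = (\<Union>j<H. {A. A \<subseteq> {1..n} \<and> card A = n div 2 + j})"
  have "L \<subseteq> Pow {1..n}" unfolding L_def by blast
  then have "finite L" by (rule finite_subset) simp
  have "Pow L \<subseteq> free_families P n"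
  proof
    fix F assume "F \<in> Pow L"
    have "card ` F \<subseteq> (\<lambda>j. n div 2 + j) ` {..<H}" using \<open>F \<in> Pow L\<close> unfolding L_def by blast
    moreover have "card ((\<lambda>j. n div 2 + j) ` {..<H}) < height P"
      using height_ge_1[OF assms(1,2)] unfolding H_def by (simp add: card_image)
    moreover have "\<forall>A\<in>F. finite A" using \<open>F \<in> Pow L\<close> \<open>L \<subseteq> Pow {1..n}\<close> by (auto intro: finite_subset)
    ultimately have "P_free P F" using assms(1) by (intro P_free_if_few_sizes) auto
    then show "F \<in> free_families P n"
      using \<open>F \<in> Pow L\<close> \<open>L \<subseteq> Pow {1..n}\<close> unfolding free_families_def by blast
  qed
  then have "(2::real) ^ card L \<le> real (card (free_families P n))"
    using card_mono[OF finite_free_families] card_Pow[of L] \<open>finite L\<close>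
    by (metis of_nat_le_iff of_nat_numeral of_nat_power)
  moreover have "0 < real (card (free_families P n))"
    by (rule order_less_le_trans[OF _ \<open>2 ^ card L \<le> _\<close>]) simp
  ultimately have "log 2 (2 ^ card L) \<le> log 2 (real (card (free_families P n)))"
    by (subst log_le_cancel_iff) auto
  then have "real (card L) \<le> log 2 (real (card (free_families P n)))"
    by (simp add: log_nat_power)
  moreover have "real H * real (n choose (n div 2)) * (1 - real H ^ 2 / real (n div 2)) \<le> real (card L)"
    unfolding L_def using assms(3) by (intro card_middle_layers_ge) auto
  moreover have "0 < real (n choose (n div 2))" by simp
  ultimately show ?thesis by (simp add: le_divide_eq mult.commute mult.left_commute)
qed

lemma eventually_log_card_free_families_gt:
  assumes "finite P" "P \<noteq> {}" "a < real (height P) - 1"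
  shows "\<forall>\<^sub>F n in sequentially. a < log 2 (real (card (free_families P n))) / real (n choose (n div 2))"
proof -
  define H where "H = real (height P - 1)"
  have H: "H = real (height P) - 1" using height_ge_1[OF assms(1,2)] unfolding H_def by simp
  have "(\<lambda>n::nat. H * (1 - 4 * H ^ 2 / real n)) \<longlonglongrightarrow> H" by real_asymp
  then have "\<forall>\<^sub>F n in sequentially. a < H * (1 - 4 * H ^ 2 / real n)"
    using assms(3) H by (intro order_tendstoD(1)) auto
  moreover have "\<forall>\<^sub>F n in sequentially. 2 \<le> n" by (rule eventually_ge_at_top)
  ultimately show ?thesis
  proof eventually_elim
    case (elim n)
    have "real n \<le> 4 * real (n div 2)" using elim(2) by linarith
    then have "real n * H ^ 2 \<le> 4 * real (n div 2) * H ^ 2" by (rule mult_right_mono) simp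
    moreover have "0 < real (n div 2)" "0 < real n" using elim(2) by auto
    ultimately have "H ^ 2 / real (n div 2) \<le> 4 * H ^ 2 / real n"
      by (simp add: field_simps)
    then have "H * (1 - 4 * H ^ 2 / real n) \<le> H * (1 - H ^ 2 / real (n div 2))"
      unfolding H_def by (intro mult_left_mono) auto
    also have "\<dots> \<le> log 2 (real (card (free_families P n))) / real (n choose (n div 2))"
      using log_card_free_families_ge[OF assms(1,2)] elim(2) unfolding H_def by simp
    finally show ?case using elim(1) by linarith
  qed
qed

lemma nat_floor_bounds:
  fixes y p :: real
  assumes "0 \<le> p" "4 * p + 2 \<le> y"
  shows "y / 2 \<le> real (nat \<lfloor>y\<rfloor>)" "real (nat \<lfloor>y\<rfloor>) \<le> y" "2 * p + 1 \<le> real (nat \<lfloor>y\<rfloor>)"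
proof -
  have "0 \<le> \<lfloor>y\<rfloor>" using assms by simp
  then have floor: "real (nat \<lfloor>y\<rfloor>) = real_of_int \<lfloor>y\<rfloor>" by simp
  then show "real (nat \<lfloor>y\<rfloor>) \<le> y" by simp
  have "y - 1 < real (nat \<lfloor>y\<rfloor>)" unfolding floor by linarith
  then show "y / 2 \<le> real (nat \<lfloor>y\<rfloor>)" "2 * p + 1 \<le> real (nat \<lfloor>y\<rfloor>)" using assms by linarith+
qed

lemma fingerprint_size_bounds:
  fixes p N :: real
  assumes "1 \<le> p" "2 * p + 1 \<le> real D" "2 \<le> N"
  defines "m \<equiv> nat \<lceil>p * N / real D\<rceil>"
  shows "p * N / real D \<le> real m" "real m < p * N / real D + 1" "1 \<le> m" "real m \<le> N"
    and "N / real m \<le> real D"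
proof -
  have "0 < real D" using assms(1,2) by linarith
  have "0 < p * N / real D" using assms(1,3) \<open>0 < real D\<close> by simp
  then show m_ge: "p * N / real D \<le> real m" and m_less: "real m < p * N / real D + 1"
    unfolding m_def by linarith+
  then show "1 \<le> m" using \<open>0 < p * N / real D\<close> by linarith
  have "p / real D \<le> 1 / 2" using assms(2) \<open>0 < real D\<close> by (simp add: field_simps)
  then have "p / real D * N \<le> 1 / 2 * N" using assms(3) by (intro mult_right_mono) auto
  then have "p * N / real D \<le> N / 2" by simp
  then show "real m \<le> N" using m_less assms(3) by linarith
  have "N / real m \<le> N / (p * N / real D)"
    using m_ge \<open>0 < p * N / real D\<close> assms(3) by (intro divide_left_mono mult_pos_pos) auto
  also have "\<dots> = real D / p" using assms(1,3) by (simp add: field_simps)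
  also have "\<dots> \<le> real D" using assms(1) \<open>0 < real D\<close> by (simp add: divide_le_eq)
  finally show "N / real m \<le> real D" .
qed

lemma fingerprint_size_over_central_binomial:
  fixes p \<delta> :: real
  assumes "1 \<le> n" "0 < \<delta>" "0 \<le> p" "\<delta> * real n / 2 \<le> real D"
  shows "(p * 2 ^ n / real D + 1) / real (n choose (n div 2))
           \<le> 8 * p / \<delta> * sqrt (real n) / real n + 4 * sqrt (real n) / 2 ^ n"
proof -
  let ?B = "real (n choose (n div 2))"
  have "0 < ?B" by simp
  have "0 < \<delta> * real n / 2" using assms(1,2) by simp
  then have "0 < real D" using assms(4) by linarith
  have central: "2 ^ n / ?B \<le> 4 * sqrt (real n)"
    using two_power_le_central_binomial[OF assms(1)] \<open>0 < ?B\<close> by (simp add: divide_le_eq)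
  have "p * 2 ^ n / real D / ?B = p / real D * (2 ^ n / ?B)" by simp
  also have "\<dots> \<le> p / real D * (4 * sqrt (real n))"
    using central assms(3) \<open>0 < real D\<close> by (intro mult_left_mono) auto
  also have "\<dots> \<le> p / (\<delta> * real n / 2) * (4 * sqrt (real n))"
    using assms \<open>0 < real D\<close> by (intro mult_right_mono divide_left_mono) auto
  also have "\<dots> = 8 * p / \<delta> * sqrt (real n) / real n" by (simp add: field_simps)
  finally have "p * 2 ^ n / real D / ?B \<le> 8 * p / \<delta> * sqrt (real n) / real n" .
  moreover have "1 / ?B \<le> 4 * sqrt (real n) / 2 ^ n"
    using two_power_le_central_binomial[OF assms(1)] \<open>0 < ?B\<close> by (simp add: field_simps)
  ultimately show ?thesis by (simp add: add_divide_distrib)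
qed

lemma log2_two_exp_nonneg:
  fixes y :: real
  assumes "1 \<le> y"
  shows "0 \<le> log 2 (2 * exp 1 * y)"
proof -
  have "1 \<le> 2 * exp (1::real)" using exp_ge_add_one_self[of 1] by simp
  then have "1 \<le> 2 * exp 1 * y" using mult_mono[of 1 "2 * exp 1" 1 y] assms by simp
  then show ?thesis using log_mono[of 2 1] by fastforce
qed

text \<open>The fingerprints have at most m < |P| 2^n / D + 1 elements, and the logarithm of the
  number of P-free families is at most R + m log2 (2e 2^n / m), with 2^n / m \<le> D.\<close>
lemma log_card_free_families_le_blowup_size:
  assumes "tree_poset P" "x \<in> P" "1 \<le> n" "2 * real (card P) + 1 \<le> real D"
    and blowup: "\<And>F. F \<subseteq> Pow {1..n} \<Longrightarrow> R \<le> real (card F) \<Longrightarrow> contains_blowup F P x D"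
  shows "log 2 (real (card (free_families P n)))
           \<le> R + (real (card P) * 2 ^ n / real D + 1) * log 2 (2 * exp 1 * real D)"
proof -
  define V where "V = Pow {1..n}"
  define M where "M = real (card P) * real (card V) / real D"
  define m where "m = nat \<lceil>M\<rceil>"
  have "finite P" "P \<noteq> {}" using assms(1) unfolding tree_poset_def is_poset_def by auto
  then have "1 \<le> real (card P)" by (simp add: Suc_le_eq card_gt_0_iff)
  then have "0 < D" using assms(4) by simp
  have card_V: "real (card V) = 2 ^ n" unfolding V_def by (simp add: card_Pow)
  have "(2::real) ^ 1 \<le> 2 ^ n" using assms(3) by (intro power_increasing) auto
  then have "2 \<le> real (card V)" unfolding card_V by simp
  note m = fingerprint_size_bounds[OF \<open>1 \<le> real (card P)\<close> assms(4) \<open>2 \<le> real (card V)\<close>,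
    folded M_def m_def]
  have "rooted_tree_poset P x" using assms(1,2) by unfold_locales
  then obtain C where "is_container_map P D R V C"
    using container_map_exists[of P x V D R V] blowup \<open>0 < D\<close> unfolding V_def by fastforce
  then have "log 2 (real (card (free_families P n)))
      \<le> R + real m * log 2 (2 * exp 1 * (real (card V) / real m))"
    unfolding free_families_def V_def[symmetric] using \<open>P \<noteq> {}\<close> m(1,3,4) M_def
    by (intro log_card_P_free_le) (auto simp: V_def)
  also have "real m * log 2 (2 * exp 1 * (real (card V) / real m)) \<le> (M + 1) * log 2 (2 * exp 1 * real D)"
  proof (rule mult_mono)
    have "1 \<le> real (card V) / real m" using m(3,4) by simp
    then show "0 \<le> log 2 (2 * exp 1 * (real (card V) / real m))" by (rule log2_two_exp_nonneg)
    have "2 * exp 1 * (real (card V) / real m) \<le> 2 * exp 1 * real D"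
      using m(5) by (intro mult_left_mono) auto
    moreover have "0 < 2 * exp 1 * (real (card V) / real m)"
      using \<open>1 \<le> real (card V) / real m\<close> by (intro mult_pos_pos) auto
    ultimately show "log 2 (2 * exp 1 * (real (card V) / real m)) \<le> log 2 (2 * exp 1 * real D)"
      by (intro log_mono) auto
  qed (use m(2) in auto)
  finally show ?thesis unfolding M_def card_V by simp
qed

lemma log_card_free_families_le:
  fixes \<delta> \<epsilon> :: real
  assumes "tree_poset P" "x \<in> P" "0 < \<delta>" "1 \<le> n" "4 * real (card P) + 2 \<le> \<delta> * real n"
    and blowup: "\<forall>F. F \<subseteq> Pow {1..n} \<and>
        (real (height P) - 1 + \<epsilon>) * real (n choose (n div 2)) \<le> real (card F)
        \<longrightarrow> contains_blowup F P x (nat \<lfloor>\<delta> * real n\<rfloor>)"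
  shows "log 2 (real (card (free_families P n))) / real (n choose (n div 2))
           \<le> real (height P) - 1 + \<epsilon> + (8 * real (card P) / \<delta> * sqrt (real n) / real n
               + 4 * sqrt (real n) / 2 ^ n) * log 2 (2 * exp 1 * (\<delta> * real n))"
proof -
  define B where "B = real (n choose (n div 2))"
  define D where "D = nat \<lfloor>\<delta> * real n\<rfloor>"
  define M where "M = real (card P) * 2 ^ n / real D"
  define K where "K = log 2 (2 * exp 1 * (\<delta> * real n))"
  have D: "\<delta> * real n / 2 \<le> real D" "real D \<le> \<delta> * real n" "2 * real (card P) + 1 \<le> real D"
    unfolding D_def using nat_floor_bounds[OF _ assms(5)] by auto
  have "0 \<le> M" unfolding M_def by simp
  have "log 2 (real (card (free_families P n))) \<le> (real (height P) - 1 + \<epsilon>) * B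
      + (M + 1) * log 2 (2 * exp 1 * real D)"
    unfolding M_def using blowup unfolding B_def D_def
    by (intro log_card_free_families_le_blowup_size[OF assms(1,2,4) D(3)[unfolded D_def]]) auto
  also have "log 2 (2 * exp 1 * real D) \<le> K"
  proof -
    have "0 < 2 * exp 1 * real D" using D(3) by (simp add: add_pos_nonneg)
    moreover have "2 * exp 1 * real D \<le> 2 * exp 1 * (\<delta> * real n)" using D(2) by simp
    ultimately show ?thesis unfolding K_def by (intro log_mono) auto
  qed
  finally have "log 2 (real (card (free_families P n))) / B
      \<le> ((real (height P) - 1 + \<epsilon>) * B + (M + 1) * K) / B"
    using \<open>0 \<le> M\<close> unfolding B_def by (simp add: divide_right_mono mult_left_mono)
  also have "\<dots> = real (height P) - 1 + \<epsilon> + (M + 1) / B * K"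
    unfolding B_def by (simp add: field_simps)
  also have "(M + 1) / B * K
      \<le> (8 * real (card P) / \<delta> * sqrt (real n) / real n + 4 * sqrt (real n) / 2 ^ n) * K"
  proof (rule mult_right_mono)
    show "(M + 1) / B \<le> 8 * real (card P) / \<delta> * sqrt (real n) / real n + 4 * sqrt (real n) / 2 ^ n"
      unfolding M_def B_def using fingerprint_size_over_central_binomial[OF assms(4,3) _ D(1)] by simp
    show "0 \<le> K" unfolding K_def using D(2,3) by (intro log2_two_exp_nonneg) linarith
  qed
  finally show ?thesis unfolding B_def K_def by simp
qed

lemma eventually_log_card_free_families_lt:
  fixes \<delta> \<epsilon> :: real
  assumes "tree_poset P" "x \<in> P" "0 < \<epsilon>" "0 < \<delta>"
    and blowup: "\<forall>\<^sub>F n in sequentially. \<forall>F. F \<subseteq> Pow {1..n} \<and>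
        (real (height P) - 1 + \<epsilon>) * real (n choose (n div 2)) \<le> real (card F)
        \<longrightarrow> contains_blowup F P x (nat \<lfloor>\<delta> * real n\<rfloor>)"
  shows "\<forall>\<^sub>F n in sequentially.
           log 2 (real (card (free_families P n))) / real (n choose (n div 2)) < real (height P) - 1 + 2 * \<epsilon>"
proof -
  have "(\<lambda>n::nat. (8 * real (card P) / \<delta> * sqrt (real n) / real n + 4 * sqrt (real n) / 2 ^ n)
      * log 2 (2 * exp 1 * (\<delta> * real n))) \<longlonglongrightarrow> 0"
    using \<open>0 < \<delta>\<close> by real_asymp
  then have "\<forall>\<^sub>F n in sequentially. (8 * real (card P) / \<delta> * sqrt (real n) / real n
      + 4 * sqrt (real n) / 2 ^ n) * log 2 (2 * exp 1 * (\<delta> * real n)) < \<epsilon>"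
    using \<open>0 < \<epsilon>\<close> by (rule order_tendstoD(2))
  moreover have "\<forall>\<^sub>F n in sequentially. 4 * real (card P) + 2 \<le> \<delta> * real n"
    using \<open>0 < \<delta>\<close> by real_asymp
  moreover have "\<forall>\<^sub>F n in sequentially. 1 \<le> n" by (rule eventually_ge_at_top)
  ultimately show ?thesis using blowup
  proof eventually_elim
    case (elim n)
    then show ?case using log_card_free_families_le[OF assms(1,2,4) elim(3,2,4)] by linarith
  qed
qed

theorem theorem1p6:
  fixes P :: "'a set set" and x :: "'a set"
  assumes tree: "tree_poset P"
    and xP: "x \<in> P"
    and blow: "\<forall>\<epsilon>::real. \<epsilon> > 0 \<longrightarrow> (\<exists>\<delta>::real. \<delta> > 0 \<and>
        (\<forall>\<^sub>F n in sequentially. \<forall>F. F \<subseteq> Pow {1..n} \<and>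
            real (card F) \<ge> (real (height P) - 1 + \<epsilon>) * real (n choose (n div 2))
            \<longrightarrow> contains_blowup F P x (nat \<lfloor>\<delta> * real n\<rfloor>)))"
  shows "(\<lambda>n::nat. log 2 (real (card {F. F \<subseteq> Pow {1..n} \<and> P_free P F}))
                    / real (n choose (n div 2)))
           \<longlonglongrightarrow> real (height P) - 1"
  unfolding free_families_def[symmetric]
proof (rule order_tendstoI)
  fix a assume "a < real (height P) - 1"
  moreover have "finite P" "P \<noteq> {}" using tree unfolding tree_poset_def is_poset_def by auto
  ultimately show "\<forall>\<^sub>F n in sequentially.
      a < log 2 (real (card (free_families P n))) / real (n choose (n div 2))"
    by (intro eventually_log_card_free_families_gt)
next
  fix a assume "real (height P) - 1 < a"
  define \<epsilon> where "\<epsilon> = (a - (real (height P) - 1)) / 2"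
  have "0 < \<epsilon>" unfolding \<epsilon>_def using \<open>real (height P) - 1 < a\<close> by simp
  then obtain \<delta> where "0 < \<delta>" and "\<forall>\<^sub>F n in sequentially. \<forall>F. F \<subseteq> Pow {1..n} \<and>
      (real (height P) - 1 + \<epsilon>) * real (n choose (n div 2)) \<le> real (card F)
      \<longrightarrow> contains_blowup F P x (nat \<lfloor>\<delta> * real n\<rfloor>)"
    using blow by blast
  then have "\<forall>\<^sub>F n in sequentially.
      log 2 (real (card (free_families P n))) / real (n choose (n div 2)) < real (height P) - 1 + 2 * \<epsilon>"
    using eventually_log_card_free_families_lt[OF tree xP \<open>0 < \<epsilon>\<close>] by blast
  moreover have "real (height P) - 1 + 2 * \<epsilon> = a" unfolding \<epsilon>_def by (simp add: field_simps)
  ultimately show "\<forall>\<^sub>F n in sequentially.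
      log 2 (real (card (free_families P n))) / real (n choose (n div 2)) < a"
    by simp
qed

end
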